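(* Consider a finite reward-free MDP with occupancy polytope $\Phi$ and fix $d_e^\star\in\Phi$. There exists a constant $C>0$, depending only on the reward-free MDP (with $d_e^\star$ fixed), such that for every dataset $\mathcal D=\{(d_e^k,\epsilon^k)\}_{k=1}^K$ ($d_e^k\in\Phi$, $\epsilon^k\ge0$) with $\mathcal R(\mathcal D)\neq\emptyset$, \[d_H\big(\mathcal R(\mathcal D)\mid\mathcal R(d_e^\star)\big)\le C\,\mathrm{Gap}\big(\mathcal R(\mathcal D),\mathcal R(d_e^\star)\big).\] In particular, $\mathrm{Gap}(\mathcal R(\mathcal D),\mathcal R(d_e^\star))\to0$ implies $d_H(\mathcal R(\mathcal D)\mid\mathcal R(d_e^\star))\to0$.
   Context: The MDP has finite $S$, $A$, transitions $P$, initial distribution $\mu_0$, discount $\gamma\in(0,1)$; $(Md)(s)=\sum_a d(s,a)-\gamma\sum_{s',a'}P(s\mid s',a')d(s',a')$ and $\Phi=\{d\ge0:Md=(1-\gamma)\mu_0\}$. Rewards are $r\in\Delta(S\times A)$. $\mathrm{subopt}(r,d):=\max_{\tilde d\in\Phi}r^\top\tilde d-r^\top d$. $\mathcal R(\mathcal D):=\{r\in\Delta(S\times A):\mathrm{subopt}(r,d_e^k)\le\epsilon^k\ \forall k\}$; $\mathcal R(d_e^\star):=\{r\in\Delta(S\times A):\mathrm{subopt}(r,d_e^\star)=0\}$. $\mathrm{Gap}(\mathcal R,\mathcal R(d_e^\star)):=\max_{r\in\mathcal R}\mathrm{subopt}(r,d_e^\star)$. For nonempty $A',B\subset\mathbb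 R^m$, $d_H(A'\mid B):=\sup_{x\in A'}\inf_{y\in B}\|x-y\|_\infty$. *)

theory Defs
  imports "HOL-Analysis.Analysis"
begin

text \<open>Occupancy measures and rewards are functions on the finite set S x A.
  The transition kernel is P (s',a') s = P(s | s',a').\<close>

definition flow_op :: "('s \<times> 'a \<Rightarrow> 's \<Rightarrow> real) \<Rightarrow> real \<Rightarrow> ('s::finite \<times> 'a::finite \<Rightarrow> real) \<Rightarrow> 's \<Rightarrow> real" where
  "flow_op P \<gamma> d s = (\<Sum>a\<in>UNIV. d (s, a)) - \<gamma> * (\<Sum>sa'\<in>UNIV. P sa' s * d sa')"

definition occupancy_set :: "('s \<times> 'a \<Rightarrow> 's \<Rightarrow> real) \<Rightarrow> real \<Rightarrow> ('s \<Rightarrow> real) \<Rightarrow> ('s::finite \<times> 'a::finite \<Rightarrow> real) set" where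
  "occupancy_set P \<gamma> \<mu>0 = {d. (\<forall>x. 0 \<le> d x) \<and> (\<forall>s. flow_op P \<gamma> d s = (1 - \<gamma>) * \<mu>0 s)}"

definition reward_simplex :: "('x::finite \<Rightarrow> real) set" where
  "reward_simplex = {r. (\<forall>x. 0 \<le> r x) \<and> (\<Sum>x\<in>UNIV. r x) = 1}"

definition ret :: "('x::finite \<Rightarrow> real) \<Rightarrow> ('x \<Rightarrow> real) \<Rightarrow> real" where
  "ret r d = (\<Sum>x\<in>UNIV. r x * d x)"

definition subopt :: "('s \<times> 'a \<Rightarrow> 's \<Rightarrow> real) \<Rightarrow> real \<Rightarrow> ('s \<Rightarrow> real) \<Rightarrow> ('s::finite \<times> 'a::finite \<Rightarrow> real) \<Rightarrow> ('s \<times> 'a \<Rightarrow> real) \<Rightarrow> real" where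
  "subopt P \<gamma> \<mu>0 r d = (SUP d'\<in>occupancy_set P \<gamma> \<mu>0. ret r d') - ret r d"

definition reward_set_data :: "('s \<times> 'a \<Rightarrow> 's \<Rightarrow> real) \<Rightarrow> real \<Rightarrow> ('s \<Rightarrow> real) \<Rightarrow> nat \<Rightarrow> (nat \<Rightarrow> ('s::finite \<times> 'a::finite \<Rightarrow> real)) \<Rightarrow> (nat \<Rightarrow> real) \<Rightarrow> ('s \<times> 'a \<Rightarrow> real) set" where
  "reward_set_data P \<gamma> \<mu>0 K de eps = {r \<in> reward_simplex. \<forall>k\<in>{1..K}. subopt P \<gamma> \<mu>0 r (de k) \<le> eps k}"

definition reward_set_expert :: "('s \<times> 'a \<Rightarrow> 's \<Rightarrow> real) \<Rightarrow> real \<Rightarrow> ('s \<Rightarrow> real) \<Rightarrow> ('s::finite \<times> 'a::finite \<Rightarrow> real) \<Rightarrow> ('s \<times> 'a \<Rightarrow> real) set" where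
  "reward_set_expert P \<gamma> \<mu>0 dstar = {r \<in> reward_simplex. subopt P \<gamma> \<mu>0 r dstar = 0}"

definition gap :: "('s \<times> 'a \<Rightarrow> 's \<Rightarrow> real) \<Rightarrow> real \<Rightarrow> ('s \<Rightarrow> real) \<Rightarrow> ('s::finite \<times> 'a::finite \<Rightarrow> real) set \<Rightarrow> ('s \<times> 'a \<Rightarrow> real) \<Rightarrow> real" where
  "gap P \<gamma> \<mu>0 R dstar = (SUP r\<in>R. subopt P \<gamma> \<mu>0 r dstar)"

definition linf_dist :: "('x::finite \<Rightarrow> real) \<Rightarrow> ('x \<Rightarrow> real) \<Rightarrow> real" where
  "linf_dist x y = Max (range (\<lambda>i. \<bar>x i - y i\<bar>))"

definition hausdorff_dir :: "('x::finite \<Rightarrow> real) set \<Rightarrow> ('x \<Rightarrow> real) set \<Rightarrow> real" where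
  "hausdorff_dir A B = (SUP x\<in>A. INF y\<in>B. linf_dist x y)"

end

theory Submission imports Defs begin

(* Let V be a finite vertex set of the occupancy polytope. Then
   subopt(r, dstar) = max over w in V of (w - dstar) . r is a nonnegative maximum of finitely many
   linear functions of r, and R(dstar) is its zero set in the reward simplex. The epigraph of
   such a function over the simplex, truncated at a uniform bound, is a polytope on which the
   function becomes the linear height coordinate. For a linear function a that is nonnegative
   on a polytope conv U and vanishes at some z0 of it, a Hoffman-type error bound holds:
   sending every vertex of positive height to z0, with the same convex weights, moves a point
   by at most D/m times its height, where D bounds the distance of the vertices to z0 and m is
   the least positive vertex height. Projecting back to rewards gives
   dist_inf(r, R(dstar)) <= C subopt(r, dstar), and taking suprema over R(D) gives the theorem. *)

lemma polytope_linear_error_bound: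
  fixes S :: "'e::euclidean_space set"
  assumes "polytope S" and nonneg: "\<And>x. x \<in> S \<Longrightarrow> 0 \<le> a \<bullet> x"
    and z0: "z0 \<in> S" "a \<bullet> z0 = 0"
  shows "\<exists>C>0. \<forall>x\<in>S. \<exists>z\<in>S. a \<bullet> z = 0 \<and> norm (x - z) \<le> C * (a \<bullet> x)"
proof -
  obtain U where fin: "finite U" and S: "S = convex hull U"
    using \<open>polytope S\<close> by (auto simp: polytope_def)
  have nnU: "\<And>u. u \<in> U \<Longrightarrow> 0 \<le> a \<bullet> u" using nonneg S by (simp add: hull_inc)
  define Pos where "Pos = {u\<in>U. 0 < a \<bullet> u}"
  define m where "m = (if Pos = {} then 1 else Min ((\<lambda>u. a \<bullet> u) ` Pos))"
  have m: "m > 0" "\<And>u. u \<in> Pos \<Longrightarrow> m \<le> a \<bullet> u"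
    using fin by (auto simp: m_def Pos_def)
  define D where "D = Max (insert 0 ((\<lambda>u. norm (u - z0)) ` U))"
  have D: "0 \<le> D" "\<And>u. u \<in> U \<Longrightarrow> norm (u - z0) \<le> D"
    using fin by (auto simp: D_def)
  define C where "C = (D + 1) / m"
  have "C > 0" using m D by (simp add: C_def)
  have "\<exists>z\<in>S. a \<bullet> z = 0 \<and> norm (x - z) \<le> C * (a \<bullet> x)" if "x \<in> S" for x
  proof -
    obtain l where l0: "\<forall>u\<in>U. 0 \<le> l u" and l1: "sum l U = 1" and lx: "(\<Sum>u\<in>U. l u *\<^sub>R u) = x"
      using \<open>x \<in> S\<close> convex_hull_finite[OF fin] S by auto
    define y where "y u = (if u \<in> Pos then z0 else u)" for u
    define z where "z = (\<Sum>u\<in>U. l u *\<^sub>R y u)"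
    have zS: "z \<in> S" unfolding z_def S
      by (rule convex_sum[OF fin convex_convex_hull l1]) (use l0 z0 S in \<open>auto simp: y_def hull_inc\<close>)
    have az: "a \<bullet> z = 0"
      using nnU z0 by (force simp: z_def inner_sum_right y_def Pos_def intro: sum.neutral)
    define s where "s = (\<Sum>u\<in>Pos. l u)"
    have "s \<ge> 0" using l0 by (auto simp: s_def Pos_def intro: sum_nonneg)
    have "x - z = (\<Sum>u\<in>U. l u *\<^sub>R (u - y u))"
      by (simp add: lx[symmetric] z_def scaleR_diff_right sum_subtractf)
    then have "norm (x - z) \<le> (\<Sum>u\<in>U. norm (l u *\<^sub>R (u - y u)))"
      by (metis norm_sum)
    also have "\<dots> \<le> (\<Sum>u\<in>U. if u \<in> Pos then l u * D else 0)"
      using l0 D by (intro sum_mono) (auto simp: y_def intro: mult_left_mono)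
    also have "\<dots> = D * s"
      using fin by (simp add: s_def Pos_def sum.inter_filter sum_distrib_left) (intro sum.cong, auto)
    finally have "norm (x - z) \<le> D * s" .
    have "m * s = (\<Sum>u\<in>U. if u \<in> Pos then l u * m else 0)"
      using fin by (simp add: s_def Pos_def sum.inter_filter sum_distrib_left) (intro sum.cong, auto)
    also have "\<dots> \<le> (\<Sum>u\<in>U. l u * (a \<bullet> u))"
      using l0 m nnU by (intro sum_mono) (auto intro: mult_left_mono)
    also have "\<dots> = a \<bullet> x" by (simp add: lx[symmetric] inner_sum_right)
    finally have "m * s \<le> a \<bullet> x" .
    have "D * s \<le> (D + 1) * s" using \<open>s \<ge> 0\<close> by (simp add: mult_right_mono)
    also have "\<dots> = C * (m * s)" using m by (simp add: C_def)
    also have "\<dots> \<le> C * (a \<bullet> x)"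
      using \<open>m * s \<le> a \<bullet> x\<close> \<open>C > 0\<close> by (simp add: mult_left_mono)
    finally have "D * s \<le> C * (a \<bullet> x)" .
    with zS az \<open>norm (x - z) \<le> D * s\<close> show ?thesis by fastforce
  qed
  with \<open>C > 0\<close> show ?thesis by blast
qed

lemma polytope_Max_inner_error_bound:
  fixes S W :: "'e::euclidean_space set"
  assumes "polytope S" "finite W" "W \<noteq> {}"
    and nonneg: "\<And>x. x \<in> S \<Longrightarrow> 0 \<le> Max ((\<lambda>w. w \<bullet> x) ` W)"
    and z0: "z0 \<in> S" "Max ((\<lambda>w. w \<bullet> z0) ` W) = 0"
  shows "\<exists>C>0. \<forall>x\<in>S. \<exists>z\<in>S. Max ((\<lambda>w. w \<bullet> z) ` W) = 0
           \<and> norm (x - z) \<le> C * Max ((\<lambda>w. w \<bullet> x) ` W)"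
proof -
  let ?f = "\<lambda>x. Max ((\<lambda>w. w \<bullet> x) ` W)"
  obtain b where b: "\<And>x. x \<in> S \<Longrightarrow> norm x \<le> b"
    using polytope_imp_bounded[OF \<open>polytope S\<close>] by (auto simp: bounded_iff)
  define B where "B = Max (norm ` W) * b"
  have f_le_B: "?f x \<le> B" if "x \<in> S" for x
  proof -
    have "?f x \<in> (\<lambda>w. w \<bullet> x) ` W" using assms(2,3) by (intro Max_in) auto
    then obtain w where w: "w \<in> W" "?f x = w \<bullet> x" by auto
    have "w \<bullet> x \<le> norm w * norm x" by (rule norm_cauchy_schwarz)
    also have "\<dots> \<le> Max (norm ` W) * b"
      using b[OF that] w(1) \<open>finite W\<close> norm_ge_zero[of w]
      by (intro mult_mono) (auto intro: order_trans[of 0 "norm w"])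
    finally show ?thesis using w by (simp add: B_def)
  qed
  \<comment> \<open>The truncated epigraph of the maximum over S; there it becomes the linear height coordinate.\<close>
  define G where "G = (S \<times> cbox 0 B) \<inter> (\<Inter>w\<in>W. {p. (w, -1) \<bullet> p \<le> (0::real)})"
  have G: "(x, t) \<in> G \<longleftrightarrow> x \<in> S \<and> ?f x \<le> t \<and> t \<le> B" for x t
  proof -
    have "(x, t) \<in> G \<longleftrightarrow> x \<in> S \<and> 0 \<le> t \<and> t \<le> B \<and> ?f x \<le> t"
      using assms(2,3) by (auto simp: G_def Max_le_iff)
    then show ?thesis using nonneg[of x] by auto
  qed
  have "polytope G" unfolding G_def using assms(1,2)
    by (intro polytope_Int_polyhedron polytope_Times polytope_interval polyhedron_Inter)
       (auto intro: polyhedron_halfspace_le)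
  moreover have "0 \<le> (0, 1) \<bullet> p" if "p \<in> G" for p
    using that nonneg by (cases p) (force simp: G)
  moreover have "(z0, 0) \<in> G" using z0 f_le_B[of z0] by (simp add: G)
  ultimately have "\<exists>C>0. \<forall>p\<in>G. \<exists>q\<in>G. (0, 1) \<bullet> q = 0 \<and> norm (p - q) \<le> C * ((0::'e, 1::real) \<bullet> p)"
    by (intro polytope_linear_error_bound) auto
  then obtain C where "C > 0"
    and C: "\<forall>p\<in>G. \<exists>q\<in>G. (0, 1) \<bullet> q = 0 \<and> norm (p - q) \<le> C * ((0::'e, 1::real) \<bullet> p)"
    by blast
  have "\<exists>z\<in>S. ?f z = 0 \<and> norm (x - z) \<le> C * ?f x" if "x \<in> S" for x
  proof -
    have "(x, ?f x) \<in> G" using that f_le_B by (simp add: G)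
    then obtain q where "q \<in> G" "(0, 1) \<bullet> q = 0"
      and "norm ((x, ?f x) - q) \<le> C * ((0::'e, 1::real) \<bullet> (x, ?f x))"
      using C by blast
    then obtain z where "(z, 0) \<in> G" and zx: "norm ((x, ?f x) - (z, 0)) \<le> C * ?f x"
      by (cases q) auto
    then have "z \<in> S" "?f z = 0" using nonneg[of z] by (auto simp: G)
    moreover have "norm (x - z) \<le> norm ((x, ?f x) - (z, 0))"
      using norm_fst_le[of "x - z"] by simp
    ultimately show ?thesis using zx by force
  qed
  with \<open>C > 0\<close> show ?thesis by blast
qed

lemma inner_le_Max_convex_hull:
  fixes V :: "'e::real_inner set"
  assumes "finite V" "y \<in> convex hull V"
  shows "a \<bullet> y \<le> Max ((\<lambda>v. a \<bullet> v) ` V)"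
proof -
  have "V \<noteq> {}" using assms(2) by auto
  have "convex hull V \<subseteq> {y. a \<bullet> y \<le> Max ((\<lambda>v. a \<bullet> v) ` V)}"
    by (rule hull_minimal) (use assms(1) \<open>V \<noteq> {}\<close> in \<open>auto simp: convex_halfspace_le\<close>)
  then show ?thesis using assms(2) by blast
qed

lemma SUP_inner_convex_hull:
  fixes V :: "'e::real_inner set"
  assumes "finite V" "V \<noteq> {}"
  shows "(SUP y\<in>convex hull V. a \<bullet> y) = Max ((\<lambda>v. a \<bullet> v) ` V)"
proof (rule cSup_eq_maximum)
  have "Max ((\<lambda>v. a \<bullet> v) ` V) \<in> (\<lambda>v. a \<bullet> v) ` V" using assms by (intro Max_in) auto
  then show "Max ((\<lambda>v. a \<bullet> v) ` V) \<in> (\<lambda>y. a \<bullet> y) ` (convex hull V)"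
    by (auto intro: hull_inc)
qed (use assms(1) inner_le_Max_convex_hull in blast)

lemma Max_inner_diff:
  fixes V :: "'e::real_inner set"
  assumes "finite V" "V \<noteq> {}"
  shows "Max ((\<lambda>v. (v - c) \<bullet> a) ` V) = Max ((\<lambda>v. a \<bullet> v) ` V) - a \<bullet> c"
proof -
  have "(\<lambda>v. (v - c) \<bullet> a) = (\<lambda>v. a \<bullet> v + - (a \<bullet> c))"
    by (simp add: fun_eq_iff inner_diff_left inner_diff_right inner_commute)
  then have "Max ((\<lambda>v. (v - c) \<bullet> a) ` V) = Max ((\<lambda>v. a \<bullet> v + - (a \<bullet> c)) ` V)"
    by (simp only:)
  also have "\<dots> = Max ((\<lambda>v. a \<bullet> v) ` V) + - (a \<bullet> c)" by (rule Max_add_commute[OF assms])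
  finally show ?thesis by simp
qed

lemma nonneg_sum_eq_1_imp_le_1:
  fixes f :: "'x::finite \<Rightarrow> real"
  assumes "\<forall>i. 0 \<le> f i" "(\<Sum>i\<in>UNIV. f i) = 1"
  shows "f i \<le> 1"
  using member_le_sum[of i UNIV f] assms by auto

lemma polytope_prob_vectors_Int:
  fixes T :: "(real ^ 'n) set"
  assumes "polyhedron T"
  shows "polytope {v \<in> T. (\<forall>i. 0 \<le> v $ i) \<and> (\<Sum>i\<in>UNIV. v $ i) = 1}"
proof -
  have "{v \<in> T. (\<forall>i. 0 \<le> v $ i) \<and> (\<Sum>i\<in>UNIV. v $ i) = 1} = cbox 0 1 \<inter> (T \<inter> {v. 1 \<bullet> v = 1})"
    by (auto simp: mem_box_cart inner_vec_def intro: nonneg_sum_eq_1_imp_le_1)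
  then show ?thesis
    by (simp add: assms polytope_Int_polyhedron polytope_interval polyhedron_hyperplane)
qed

lemma linf_dist_nonneg: "0 \<le> linf_dist x y"
  unfolding linf_dist_def by (rule order_trans[OF abs_ge_zero Max_ge]) auto

lemma linf_dist_le_norm: "linf_dist x y \<le> norm (vec_lambda x - vec_lambda y)"
  unfolding linf_dist_def
  using component_le_norm_cart[of "vec_lambda x - vec_lambda y"] by (intro Max.boundedI) auto

lemma hausdorff_dir_le_SUP:
  assumes "A \<noteq> {}" "0 \<le> C" "bdd_above (g ` A)"
    and close: "\<And>x. x \<in> A \<Longrightarrow> \<exists>y\<in>B. linf_dist x y \<le> C * g x"
  shows "hausdorff_dir A B \<le> C * (SUP x\<in>A. g x)"
  unfolding hausdorff_dir_def
proof (rule cSUP_least[OF \<open>A \<noteq> {}\<close>])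
  fix x assume "x \<in> A"
  then obtain y where "y \<in> B" "linf_dist x y \<le> C * g x" using close by blast
  moreover have "bdd_below (linf_dist x ` B)" by (rule bdd_belowI2[of _ 0]) (rule linf_dist_nonneg)
  ultimately have "(INF y\<in>B. linf_dist x y) \<le> C * g x" by (intro cINF_lower2)
  also have "\<dots> \<le> C * (SUP x\<in>A. g x)"
    using \<open>x \<in> A\<close> assms(2,3) by (intro mult_left_mono cSUP_upper) auto
  finally show "(INF y\<in>B. linf_dist x y) \<le> C * (SUP x\<in>A. g x)" .
qed

lemma sum_Pair_eq_sum_if_fst:
  fixes g :: "'s::finite \<times> 'a::finite \<Rightarrow> real"
  shows "(\<Sum>a\<in>UNIV. g (s, a)) = (\<Sum>x\<in>UNIV. if fst x = s then g x else 0)"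
proof -
  have "(\<Sum>x\<in>UNIV. if fst x = s then g x else 0) = sum g {x. fst x = s}"
    by (simp add: sum.inter_filter[symmetric])
  also have "{x::'s \<times> 'a. fst x = s} = Pair s ` UNIV" by force
  also have "sum g (Pair s ` UNIV) = (\<Sum>a\<in>UNIV. g (s, a))"
    by (subst sum.reindex) (auto simp: inj_on_def)
  finally show ?thesis by simp
qed

definition flow_row :: "('s \<times> 'a \<Rightarrow> 's \<Rightarrow> real) \<Rightarrow> real \<Rightarrow> 's \<Rightarrow> real ^ ('s::finite \<times> 'a::finite)" where
  "flow_row P \<gamma> s = (\<chi> x. (if fst x = s then 1 else 0) - \<gamma> * P x s)"

lemma flow_op_eq_inner: "flow_op P \<gamma> (($) v) s = flow_row P \<gamma> s \<bullet> v"
proof -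
  have "(\<Sum>i\<in>UNIV. ((if fst i = s then 1 else 0) - \<gamma> * P i s) * v $ i)
     = (\<Sum>i\<in>UNIV. if fst i = s then v $ i else 0) - (\<Sum>i\<in>UNIV. \<gamma> * (P i s * v $ i))"
    by (simp add: sum_subtractf[symmetric] left_diff_distrib) (intro sum.cong, auto)
  then show ?thesis unfolding flow_op_def flow_row_def inner_vec_def
    by (simp add: sum_Pair_eq_sum_if_fst[of "($) v"] sum_distrib_left)
qed

lemma occupancy_sum_eq_1:
  assumes P_sum: "\<forall>sa. (\<Sum>s\<in>UNIV. P sa s) = 1" and mu_sum: "(\<Sum>s\<in>UNIV. \<mu>0 s) = 1"
    and "\<gamma> < 1" and "d \<in> occupancy_set P \<gamma> \<mu>0"
  shows "(\<Sum>x\<in>UNIV. d x) = 1"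
proof -
  have "(\<Sum>s\<in>UNIV. \<Sum>sa\<in>UNIV. P sa s * d sa) = (\<Sum>sa\<in>UNIV. \<Sum>s\<in>UNIV. P sa s * d sa)"
    by (rule sum.swap)
  also have "\<dots> = (\<Sum>x\<in>UNIV. d x)"
    using P_sum by (simp only: sum_distrib_right[symmetric]) simp
  finally have outflow: "(\<Sum>s\<in>UNIV. \<Sum>sa\<in>UNIV. P sa s * d sa) = (\<Sum>x\<in>UNIV. d x)" .
  have "(1 - \<gamma>) * (\<Sum>x\<in>UNIV. d x) = (\<Sum>s\<in>UNIV. flow_op P \<gamma> d s)"
    unfolding flow_op_def sum_subtractf sum_distrib_left[symmetric] outflow
    by (simp add: sum.cartesian_product algebra_simps)
  also have "\<dots> = 1 - \<gamma>"
    using assms(4) mu_sum by (simp add: occupancy_set_def sum_distrib_left[symmetric])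
  finally show ?thesis using \<open>\<gamma> < 1\<close> by simp
qed

lemma polytope_occupancy_set:
  assumes "\<forall>sa. (\<Sum>s\<in>UNIV. P sa s) = 1" "(\<Sum>s\<in>UNIV. \<mu>0 s) = 1" "\<gamma> < 1"
  shows "polytope (vec_lambda ` occupancy_set P \<gamma> \<mu>0)"
proof -
  define T where "T = (\<Inter>s. {v. flow_row P \<gamma> s \<bullet> v = (1 - \<gamma>) * \<mu>0 s})"
  have "vec_lambda ` occupancy_set P \<gamma> \<mu>0 = {v \<in> T. (\<forall>i. 0 \<le> v $ i) \<and> (\<Sum>i\<in>UNIV. v $ i) = 1}"
  proof (intro set_eqI iffI)
    fix v assume "v \<in> vec_lambda ` occupancy_set P \<gamma> \<mu>0"
    then obtain d where d: "d \<in> occupancy_set P \<gamma> \<mu>0" and v: "v = vec_lambda d" by blast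
    have "v \<in> T" using d flow_op_eq_inner[of P \<gamma> v]
      by (simp add: T_def v occupancy_set_def vec_lambda_inverse)
    moreover have "\<forall>i. 0 \<le> v $ i" using d by (simp add: v occupancy_set_def)
    moreover have "(\<Sum>i\<in>UNIV. v $ i) = 1" using occupancy_sum_eq_1[OF assms d] by (simp add: v)
    ultimately show "v \<in> {v \<in> T. (\<forall>i. 0 \<le> v $ i) \<and> (\<Sum>i\<in>UNIV. v $ i) = 1}" by blast
  next
    fix v assume "v \<in> {v \<in> T. (\<forall>i. 0 \<le> v $ i) \<and> (\<Sum>i\<in>UNIV. v $ i) = 1}"
    then have "($) v \<in> occupancy_set P \<gamma> \<mu>0"
      by (simp add: T_def occupancy_set_def flow_op_eq_inner)
    then show "v \<in> vec_lambda ` occupancy_set P \<gamma> \<mu>0" by (metis image_eqI vec_lambda_eta)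
  qed
  also have "polytope \<dots>"
    by (rule polytope_prob_vectors_Int) (auto simp: T_def intro: polyhedron_hyperplane)
  finally show ?thesis .
qed

lemma ret_eq_inner: "ret r d = vec_lambda r \<bullet> vec_lambda d"
  by (simp add: ret_def inner_vec_def)

lemma subopt_eq_Max_vertices:
  assumes "finite V" "V \<noteq> {}" "vec_lambda ` occupancy_set P \<gamma> \<mu>0 = convex hull V"
  shows "subopt P \<gamma> \<mu>0 r d = Max ((\<lambda>w. (w - vec_lambda d) \<bullet> vec_lambda r) ` V)"
proof -
  have "(SUP d'\<in>occupancy_set P \<gamma> \<mu>0. ret r d') = (SUP w\<in>convex hull V. vec_lambda r \<bullet> w)"
    unfolding assms(3)[symmetric] ret_eq_inner by (simp add: image_image)
  then show ?thesis
    by (simp add: subopt_def ret_eq_inner SUP_inner_convex_hull Max_inner_diff assms(1,2))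
qed

lemma subopt_le_1:
  assumes "\<forall>sa. (\<Sum>s\<in>UNIV. P sa s) = 1" "(\<Sum>s\<in>UNIV. \<mu>0 s) = 1" "\<gamma> < 1"
    and r: "r \<in> reward_simplex" and d: "d \<in> occupancy_set P \<gamma> \<mu>0"
  shows "subopt P \<gamma> \<mu>0 r d \<le> 1"
proof -
  have "ret r d' \<le> 1" if "d' \<in> occupancy_set P \<gamma> \<mu>0" for d'
  proof -
    have "ret r d' \<le> (\<Sum>x\<in>UNIV. r x * 1)" unfolding ret_def
      using r that occupancy_sum_eq_1[OF assms(1-3) that]
      by (intro sum_mono mult_left_mono nonneg_sum_eq_1_imp_le_1)
         (auto simp: reward_simplex_def occupancy_set_def)
    then show ?thesis using r by (simp add: reward_simplex_def)
  qed
  then have "(SUP d'\<in>occupancy_set P \<gamma> \<mu>0. ret r d') \<le> 1"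
    using d by (intro cSUP_least) auto
  moreover have "0 \<le> ret r d"
    using r d by (auto simp: ret_def reward_simplex_def occupancy_set_def intro: sum_nonneg)
  ultimately show ?thesis by (simp add: subopt_def)
qed

lemma reward_set_expert_error_bound:
  fixes P :: "'s::finite \<times> 'a::finite \<Rightarrow> 's \<Rightarrow> real"
  assumes mdp: "\<forall>sa. (\<Sum>s\<in>UNIV. P sa s) = 1" "(\<Sum>s\<in>UNIV. \<mu>0 s) = 1" "\<gamma> < 1"
    and dstar: "dstar \<in> occupancy_set P \<gamma> \<mu>0"
  shows "\<exists>C>0. \<forall>r\<in>reward_simplex. \<exists>r'\<in>reward_set_expert P \<gamma> \<mu>0 dstar.
           linf_dist r r' \<le> C * subopt P \<gamma> \<mu>0 r dstar"
proof -
  obtain V where "finite V" and hull_V: "vec_lambda ` occupancy_set P \<gamma> \<mu>0 = convex hull V"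
    using polytope_occupancy_set[OF mdp] by (auto simp: polytope_def)
  define ds where "ds = vec_lambda dstar"
  have "ds \<in> convex hull V" using dstar hull_V by (auto simp: ds_def)
  then have "V \<noteq> {}" by auto
  have sum_V: "(\<Sum>i\<in>UNIV. w $ i) = 1" if "w \<in> convex hull V" for w
    using that occupancy_sum_eq_1[OF mdp] unfolding hull_V[symmetric] by auto
  define W where "W = (\<lambda>w. w - ds) ` V"
  have "finite W" "W \<noteq> {}" using \<open>finite V\<close> \<open>V \<noteq> {}\<close> by (auto simp: W_def)
  let ?f = "\<lambda>x. Max ((\<lambda>u. u \<bullet> x) ` W)"
  have f_eq: "?f x = Max ((\<lambda>w. x \<bullet> w) ` V) - x \<bullet> ds" for x
    using Max_inner_diff[OF \<open>finite V\<close> \<open>V \<noteq> {}\<close>] by (simp add: W_def image_image)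
  have subopt_eq: "subopt P \<gamma> \<mu>0 r dstar = ?f (vec_lambda r)" for r
    using subopt_eq_Max_vertices[OF \<open>finite V\<close> \<open>V \<noteq> {}\<close> hull_V] by (simp add: W_def image_image ds_def)
  define S :: "(real ^ ('s \<times> 'a)) set" where "S = {v. (\<forall>i. 0 \<le> v $ i) \<and> (\<Sum>i\<in>UNIV. v $ i) = 1}"
  have "polytope S"
    unfolding S_def using polytope_prob_vectors_Int[OF polyhedron_UNIV] by (simp only: UNIV_I simp_thms)
  \<comment> \<open>The uniform reward makes every policy optimal.\<close>
  define z0 :: "real ^ ('s \<times> 'a)" where "z0 = (\<chi> i. 1 / real CARD('s \<times> 'a))"
  have "z0 \<in> S" by (simp add: S_def z0_def)
  have "(w - ds) \<bullet> z0 = 0" if "w \<in> V" for w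
    using sum_V[of w] sum_V[of ds] \<open>ds \<in> convex hull V\<close> that
    by (simp add: z0_def inner_vec_def hull_inc sum_subtractf sum_divide_distrib[symmetric])
  then have "?f z0 = 0"
    using \<open>V \<noteq> {}\<close> by (simp add: W_def image_image image_constant_conv cong: image_cong)
  moreover have "0 \<le> ?f x" for x
    using inner_le_Max_convex_hull[OF \<open>finite V\<close> \<open>ds \<in> convex hull V\<close>] by (simp add: f_eq)
  ultimately obtain C where "C > 0"
    and C: "\<forall>x\<in>S. \<exists>z\<in>S. ?f z = 0 \<and> norm (x - z) \<le> C * ?f x"
    using polytope_Max_inner_error_bound[OF \<open>polytope S\<close> \<open>finite W\<close> \<open>W \<noteq> {}\<close> _ \<open>z0 \<in> S\<close>]
    by blast
  have "\<exists>r'\<in>reward_set_expert P \<gamma> \<mu>0 dstar. linf_dist r r' \<le> C * subopt P \<gamma> \<mu>0 r dstar"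
    if "r \<in> reward_simplex" for r
  proof -
    have "vec_lambda r \<in> S" using that by (simp add: S_def reward_simplex_def)
    then obtain z where "z \<in> S" "?f z = 0" and z: "norm (vec_lambda r - z) \<le> C * ?f (vec_lambda r)"
      using C by blast
    then have "($) z \<in> reward_set_expert P \<gamma> \<mu>0 dstar"
      by (simp add: reward_set_expert_def reward_simplex_def S_def subopt_eq)
    moreover have "linf_dist r (($) z) \<le> C * subopt P \<gamma> \<mu>0 r dstar"
      using linf_dist_le_norm[of r "($) z"] z by (simp add: subopt_eq)
    ultimately show ?thesis by blast
  qed
  with \<open>C > 0\<close> show ?thesis by blast
qed

theorem mainTheorem6:
  fixes P :: "'s::finite \<times> 'a::finite \<Rightarrow> 's \<Rightarrow> real"
    and \<mu>0 :: "'s \<Rightarrow> real" and \<gamma> :: real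
    and dstar :: "'s \<times> 'a \<Rightarrow> real"
  assumes P_nonneg: "\<forall>sa s. 0 \<le> P sa s"
    and P_sum: "\<forall>sa. (\<Sum>s\<in>UNIV. P sa s) = 1"
    and mu_nonneg: "\<forall>s. 0 \<le> \<mu>0 s"
    and mu_sum: "(\<Sum>s\<in>UNIV. \<mu>0 s) = 1"
    and gamma: "0 < \<gamma>" "\<gamma> < 1"
    and dstar: "dstar \<in> occupancy_set P \<gamma> \<mu>0"
  shows "\<exists>C>0. \<forall>(K::nat) (de :: nat \<Rightarrow> ('s \<times> 'a \<Rightarrow> real)) (eps :: nat \<Rightarrow> real).
            (\<forall>k\<in>{1..K}. de k \<in> occupancy_set P \<gamma> \<mu>0 \<and> 0 \<le> eps k)
            \<and> reward_set_data P \<gamma> \<mu>0 K de eps \<noteq> {}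
            \<longrightarrow> hausdorff_dir (reward_set_data P \<gamma> \<mu>0 K de eps) (reward_set_expert P \<gamma> \<mu>0 dstar)
                \<le> C * gap P \<gamma> \<mu>0 (reward_set_data P \<gamma> \<mu>0 K de eps) dstar"
proof -
  obtain C where "C > 0" and C: "\<forall>r\<in>reward_simplex. \<exists>r'\<in>reward_set_expert P \<gamma> \<mu>0 dstar.
      linf_dist r r' \<le> C * subopt P \<gamma> \<mu>0 r dstar"
    using reward_set_expert_error_bound[OF P_sum mu_sum gamma(2) dstar] by blast
  have "hausdorff_dir R (reward_set_expert P \<gamma> \<mu>0 dstar) \<le> C * gap P \<gamma> \<mu>0 R dstar"
    if "R \<noteq> {}" "R \<subseteq> reward_simplex" for R
    unfolding gap_def
  proof (rule hausdorff_dir_le_SUP)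
    show "bdd_above ((\<lambda>r. subopt P \<gamma> \<mu>0 r dstar) ` R)"
      using that subopt_le_1[OF P_sum mu_sum gamma(2) _ dstar] by (intro bdd_aboveI2[of _ _ 1]) blast
  qed (use that \<open>C > 0\<close> C in auto)
  moreover have "reward_set_data P \<gamma> \<mu>0 K de eps \<subseteq> reward_simplex" for K de eps
    by (auto simp: reward_set_data_def)
  ultimately show ?thesis using \<open>C > 0\<close> by blast
qed

end
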